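(* Let $I\subset[0,+\infty)$ be an open interval, $n\in\mathbb{N}$, $\beta\in\{-1,1\}$, $\kappa,\mu\in\,]-1,+\infty[$, $N\ge n$, $\xi\in[0,1]$, $t_0\in I$, $T>0$ with $t_0+\beta T\in I$. If the noise $\{\varpi(\tau),\tau\ge0\}$ satisfies conditions (C1), (C2) and (C3), then the noise error contribution of the Jacobi estimator $\hat D^{\mu,\kappa}_{\beta T,N,\xi}x^{(n)}(t_0)$ satisfies $e_{\varpi}^{\beta T}(t_0)=0$ almost surely.
   Context: For $a,b>-1$ let $w^{a,b}(t)=t^{b}(1-t)^{a}$, $P_k^{a,b}(t)=\sum_{s=0}^{k}\binom{k+a}{s}\binom{k+b}{k-s}(t-1)^{k-s}t^{s}$ and $\|P_k^{a,b}\|^2=\int_0^1 w^{a,b}(P_k^{a,b})^2$. With $q=N-n$ the Jacobi estimator kernel is $$p^{\beta T}(\tau)=\frac{(-1)^n}{(\beta T)^n}\sum_{i=0}^{q}\frac{P_i^{\mu+n,\kappa+n}(\xi)}{\|P_i^{\mu+n,\kappa+n}\|^2}\frac{d^n}{d\tau^n}\Big[w^{\mu+n,\kappa+n}(\tau)P_i^{\mu+n,\kappa+n}(\tau)\Big],$$ and the noise error contribution is the mean-square integral $e_{\varpi}^{\beta T}(t_0)=\int_0^1 p^{\beta T}(\tau)\varpi(t_0+\beta T\tau)d\tau$. (C1): $\{\varpi(\tau),\tau\ge0\}$ is a continuous parameter stochastic process with finite second moments whose mean value function and covariance kernel are continuous. (C2): for all $t_0$, $s$, $\tau$ with $t_0+s,t_0+\tau\in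 I$, $E[\varpi(t_0+\tau)]=\sum_{i=0}^{n-1}\nu_i t_0^{k_1(i)}\tau^i+E[\varpi(\tau)]$ and $\mathrm{Cov}[\varpi(t_0+s),\varpi(t_0+\tau)]=\Big(\sum_{i=0}^{n_1}\eta_i t_0^{k_2(i)}\tau^i\Big)\Big(\sum_{i=0}^{n_2}\eta'_i t_0^{k_3(i)}s^i\Big)+\mathrm{Cov}[\varpi(s),\varpi(\tau)]$, where $k_1(i),k_2(i),k_3(i)\in\mathbb{N}$, $\nu_i,\eta_i,\eta'_i\in\mathbb{R}$, $n_1,n_2\in\mathbb{N}$ with $\min(n_1,n_2)\le n-1$. (C3): for all $s,\tau\in I$, $E[\varpi(\tau)]=\sum_{i=0}^{n-1}\bar\nu_i\tau^i$ and $\mathrm{Cov}[\varpi(s),\varpi(\tau)]=\Big(\sum_{i=0}^{n_1}\bar\eta_i\tau^i\Big)\Big(\sum_{i=0}^{n_2}\bar\eta'_i s^i\Big)$ with $\bar\nu_i,\bar\eta_i,\bar\eta'_i\in\mathbb{R}$ and $\min(n_1,n_2)\le n-1$. *)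

theory Defs
  imports "HOL-Probability.Probability"
begin

definition jweight :: "real \<Rightarrow> real \<Rightarrow> real \<Rightarrow> real" where
  "jweight a b t = t powr b * (1 - t) powr a"

definition jacobiP :: "real \<Rightarrow> real \<Rightarrow> nat \<Rightarrow> real \<Rightarrow> real" where
  "jacobiP a b k t =
     (\<Sum>s = 0..k. ((real k + a) gchoose s) * ((real k + b) gchoose (k - s))
                   * (t - 1) ^ (k - s) * t ^ s)"

definition jnorm2 :: "real \<Rightarrow> real \<Rightarrow> nat \<Rightarrow> real" where
  "jnorm2 a b k = integral {0..1} (\<lambda>t. jweight a b t * (jacobiP a b k t)\<^sup>2)"

definition jacobi_kernel ::
  "nat \<Rightarrow> nat \<Rightarrow> real \<Rightarrow> real \<Rightarrow> real \<Rightarrow> real \<Rightarrow> real \<Rightarrow> real \<Rightarrow> real" where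
  "jacobi_kernel n N \<mu> \<kappa> \<xi> \<beta> T \<tau> =
     (-1) ^ n / (\<beta> * T) ^ n *
     (\<Sum>i = 0..N - n.
        jacobiP (\<mu> + real n) (\<kappa> + real n) i \<xi> / jnorm2 (\<mu> + real n) (\<kappa> + real n) i
        * (deriv ^^ n) (\<lambda>t. jweight (\<mu> + real n) (\<kappa> + real n) t
                              * jacobiP (\<mu> + real n) (\<kappa> + real n) i t) \<tau>)"

definition mean :: "'a measure \<Rightarrow> ('a \<Rightarrow> real) \<Rightarrow> real" where
  "mean M X = (\<integral>x. X x \<partial>M)"

definition covar :: "'a measure \<Rightarrow> ('a \<Rightarrow> real) \<Rightarrow> ('a \<Rightarrow> real) \<Rightarrow> real" where
  "covar M X Y = (\<integral>x. (X x - mean M X) * (Y x - mean M Y) \<partial>M)"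

definition ms_riemann_integral ::
  "'a measure \<Rightarrow> (real \<Rightarrow> 'a \<Rightarrow> real) \<Rightarrow> real \<Rightarrow> real \<Rightarrow> ('a \<Rightarrow> real) \<Rightarrow> bool" where
  "ms_riemann_integral M Z a b X \<longleftrightarrow>
     X \<in> borel_measurable M \<and>
     (\<forall>e>0. \<exists>\<delta>>0. \<forall>D. D tagged_division_of {a..b} \<and> (\<lambda>x. ball x \<delta>) fine D \<longrightarrow>
        (\<integral>\<^sup>+ x. ennreal (((\<Sum>(t, K)\<in>D. Henstock_Kurzweil_Integration.content K * Z t x) - X x)\<^sup>2) \<partial>M) < ennreal e)"

text \<open>Mean-square integral over [0,1], taken in the (possibly improper) sense:
  L2-limit of the mean-square integrals over [a,b] as a -> 0+, b -> 1-
  (the kernel may be unbounded at the endpoints when kappa or mu is negative).\<close>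
definition ms_integral_01 ::
  "'a measure \<Rightarrow> (real \<Rightarrow> 'a \<Rightarrow> real) \<Rightarrow> ('a \<Rightarrow> real) \<Rightarrow> bool" where
  "ms_integral_01 M Z X \<longleftrightarrow>
     X \<in> borel_measurable M \<and>
     (\<forall>e>0. \<exists>\<delta>>0. \<forall>a b. 0 < a \<and> a < \<delta> \<and> 1 - \<delta> < b \<and> b < 1 \<longrightarrow>
        (\<exists>Y. ms_riemann_integral M Z a b Y) \<and>
        (\<forall>Y. ms_riemann_integral M Z a b Y \<longrightarrow>
              (\<integral>\<^sup>+ x. ennreal ((Y x - X x)\<^sup>2) \<partial>M) < ennreal e))"

definition jacobi_noise_error ::
  "'a measure \<Rightarrow> (real \<Rightarrow> 'a \<Rightarrow> real) \<Rightarrow> nat \<Rightarrow> nat \<Rightarrow> real \<Rightarrow> real \<Rightarrow> real \<Rightarrow> real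
   \<Rightarrow> real \<Rightarrow> real \<Rightarrow> ('a \<Rightarrow> real) \<Rightarrow> bool" where
  "jacobi_noise_error M w n N \<mu> \<kappa> \<xi> \<beta> T t0 X \<longleftrightarrow>
     ms_integral_01 M (\<lambda>\<tau> x. jacobi_kernel n N \<mu> \<kappa> \<xi> \<beta> T \<tau> * w (t0 + \<beta> * T * \<tau>) x) X"

definition noise_C1 :: "'a measure \<Rightarrow> (real \<Rightarrow> 'a \<Rightarrow> real) \<Rightarrow> bool" where
  "noise_C1 M w \<longleftrightarrow>
     (\<forall>\<tau>\<ge>0. w \<tau> \<in> borel_measurable M \<and> integrable M (\<lambda>x. (w \<tau> x)\<^sup>2)) \<and>
     continuous_on {0..} (\<lambda>\<tau>. mean M (w \<tau>)) \<and>
     continuous_on ({0..} \<times> {0..}) (\<lambda>(s, \<tau>). covar M (w s) (w \<tau>))"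

definition noise_C2 :: "'a measure \<Rightarrow> (real \<Rightarrow> 'a \<Rightarrow> real) \<Rightarrow> real set \<Rightarrow> nat \<Rightarrow> bool" where
  "noise_C2 M w I n \<longleftrightarrow>
     (\<exists>(\<nu>::nat \<Rightarrow> real) (k1::nat \<Rightarrow> nat) (\<eta>::nat \<Rightarrow> real) (\<eta>'::nat \<Rightarrow> real)
        (k2::nat \<Rightarrow> nat) (k3::nat \<Rightarrow> nat) (n1::nat) (n2::nat).
        min n1 n2 < n \<and>
        (\<forall>t0 s \<tau>. t0 + s \<in> I \<and> t0 + \<tau> \<in> I \<longrightarrow>
           mean M (w (t0 + \<tau>)) = (\<Sum>i<n. \<nu> i * t0 ^ k1 i * \<tau> ^ i) + mean M (w \<tau>) \<and>
           covar M (w (t0 + s)) (w (t0 + \<tau>)) =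
             (\<Sum>i\<le>n1. \<eta> i * t0 ^ k2 i * \<tau> ^ i) * (\<Sum>i\<le>n2. \<eta>' i * t0 ^ k3 i * s ^ i)
             + covar M (w s) (w \<tau>)))"

definition noise_C3 :: "'a measure \<Rightarrow> (real \<Rightarrow> 'a \<Rightarrow> real) \<Rightarrow> real set \<Rightarrow> nat \<Rightarrow> bool" where
  "noise_C3 M w I n \<longleftrightarrow>
     (\<exists>(\<nu>::nat \<Rightarrow> real) (\<eta>::nat \<Rightarrow> real) (\<eta>'::nat \<Rightarrow> real) (n1::nat) (n2::nat).
        min n1 n2 < n \<and>
        (\<forall>s\<in>I. \<forall>\<tau>\<in>I.
           mean M (w \<tau>) = (\<Sum>i<n. \<nu> i * \<tau> ^ i) \<and>
           covar M (w s) (w \<tau>) = (\<Sum>i\<le>n1. \<eta> i * \<tau> ^ i) * (\<Sum>i\<le>n2. \<eta>' i * s ^ i)))"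

end

theory Submission
  imports Defs "HOL-Computational_Algebra.Polynomial"
begin

text \<open>
  Under (C3) the mean of the noise is a polynomial of degree \<open>< n\<close>, and its covariance is a
  product of a polynomial in \<open>\<tau>\<close> and one in \<open>s\<close>, one of them of degree \<open>< n\<close>; symmetry of the
  covariance turns it into \<open>c h(s) h(\<tau>)\<close> with \<open>deg h < n\<close>. Since \<open>\<varpi>(\<tau>) - (h(\<tau>) / h(\<tau>\<^sub>1)) \<varpi>(\<tau>\<^sub>1)\<close>
  then has variance zero, \<open>\<varpi>(\<tau>) = E \<varpi>(\<tau>) + h(\<tau>) U\<close> almost surely for a single square
  integrable \<open>U\<close>, and every mean-square Riemann integral of the kernel against the noise equals
  \<open>\<integral>p \<phi> + (\<integral>p \<psi>) U\<close> with polynomials \<open>\<phi>, \<psi>\<close> of degree \<open>< n\<close>. The kernel is a combination of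
  \<open>n\<close>-th derivatives of \<open>w\<^bsup>\<mu>+n,\<kappa>+n\<^esup> P\<^sub>i\<close>, so integrating by parts \<open>n\<close> times against a polynomial
  of degree \<open>< n\<close> leaves only boundary terms; these vanish at \<open>0\<close> and \<open>1\<close> because the weight
  exponents exceed \<open>n - 1\<close>. Hence both integrals tend to \<open>0\<close> and so does the noise error.
\<close>

(* Riemann sums below use the measure content of a box, not the content of a polynomial. *)
hide_const (open) Polynomial.content

lemma higher_pderiv_eq_0_of_degree_less:
  fixes p :: "'a::{comm_semiring_1,semiring_no_zero_divisors,semiring_char_0} poly"
  assumes "degree p < n"
  shows "(pderiv ^^ n) p = 0"
  by (rule poly_eqI) (use assms in \<open>simp add: coeff_higher_pderiv coeff_eq_0\<close>)

lemma degree_sum_monom_less: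
  fixes c :: "nat \<Rightarrow> 'a::comm_monoid_add"
  assumes "0 < m"
  shows "degree (\<Sum>i<m. monom (c i) i) < m"
proof -
  have "degree (\<Sum>i<m. monom (c i) i) \<le> m - 1"
    by (rule degree_le) (auto simp: coeff_sum coeff_monom)
  then show ?thesis using assms by linarith
qed

lemma degree_pcompose_linear_le:
  fixes p :: "'a::{comm_semiring_1,semiring_no_zero_divisors} poly"
  shows "degree (p \<circ>\<^sub>p [:a, b:]) \<le> degree p"
  using degree_pcompose_le[of p "[:a, b:]"] by (cases "b = 0") auto

lemma is_interval_affine_mem:
  fixes I :: "real set"
  assumes "is_interval I" "x \<in> I" "x + d \<in> I" "t \<in> {0..1}"
  shows "x + d * t \<in> I"
proof -
  have "(1 - t) *\<^sub>R x + t *\<^sub>R (x + d) \<in> I"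
    using assms by (intro convexD_alt) (auto simp: is_interval_convex_1)
  then show ?thesis by (simp add: algebra_simps)
qed

definition weighted_poly_term :: "real \<Rightarrow> real \<Rightarrow> real poly \<Rightarrow> nat \<Rightarrow> nat \<Rightarrow> real \<Rightarrow> real" where
  "weighted_poly_term A B p u v t = poly p t * t powr (B - real u) * (1 - t) powr (A - real v)"

(* Each derivative of poly p t * t powr B * (1 - t) powr A costs at most one power of t and one
   of 1 - t, so all derivatives of the Jacobi weight times a polynomial stay in this class. *)
inductive weighted_poly_sum :: "real \<Rightarrow> real \<Rightarrow> nat \<Rightarrow> (real \<Rightarrow> real) \<Rightarrow> bool" for A B where
  basic: "u \<le> j \<Longrightarrow> v \<le> j \<Longrightarrow> weighted_poly_sum A B j (weighted_poly_term A B p u v)"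
| add: "weighted_poly_sum A B j f \<Longrightarrow> weighted_poly_sum A B j g \<Longrightarrow> weighted_poly_sum A B j (\<lambda>t. f t + g t)"

lemma weighted_poly_term_has_derivative:
  assumes "0 < t" "t < 1"
  shows "(weighted_poly_term A B p u v has_real_derivative
           weighted_poly_term A B (pderiv p) u v t + weighted_poly_term A B (smult (B - real u) p) (Suc u) v t
           + weighted_poly_term A B (smult (real v - A) p) u (Suc v) t) (at t)"
proof -
  have "((\<lambda>t. poly p t * t powr (B - real u) * (1 - t) powr (A - real v)) has_real_derivative
     poly (pderiv p) t * t powr (B - real u) * (1 - t) powr (A - real v)
     + poly p t * ((B - real u) * t powr (B - real u - 1)) * (1 - t) powr (A - real v)
     + poly p t * t powr (B - real u) * ((A - real v) * (1 - t) powr (A - real v - 1) * (-1))) (at t)"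
    using assms by (auto intro!: derivative_eq_intros poly_DERIV simp: algebra_simps)
  then show ?thesis
    unfolding weighted_poly_term_def [abs_def] by (simp add: algebra_simps diff_diff_eq)
qed

lemma weighted_poly_sum_has_derivative:
  assumes "weighted_poly_sum A B j f"
  obtains f' where "weighted_poly_sum A B (Suc j) f'"
    "\<And>t. t \<in> {0<..<1} \<Longrightarrow> (f has_real_derivative f' t) (at t)"
proof -
  from assms have "\<exists>f'. weighted_poly_sum A B (Suc j) f' \<and>
      (\<forall>t\<in>{0<..<1}. (f has_real_derivative f' t) (at t))"
  proof (induction rule: weighted_poly_sum.induct)
    case (basic u j v p)
    let ?g = "\<lambda>t. weighted_poly_term A B (pderiv p) u v t
      + weighted_poly_term A B (smult (B - real u) p) (Suc u) v t
      + weighted_poly_term A B (smult (real v - A) p) u (Suc v) t"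
    have "weighted_poly_sum A B (Suc j) ?g"
      using basic by (intro weighted_poly_sum.intros) auto
    then show ?case
      using weighted_poly_term_has_derivative[of _ A B p u v] by auto
  next
    case (add j f g)
    then obtain f' g' where "weighted_poly_sum A B (Suc j) f'" "weighted_poly_sum A B (Suc j) g'"
      "\<forall>t\<in>{0<..<1}. (f has_real_derivative f' t) (at t)"
      "\<forall>t\<in>{0<..<1}. (g has_real_derivative g' t) (at t)" by blast
    then show ?case
      by (intro exI[of _ "\<lambda>t. f' t + g' t"]) (auto intro: weighted_poly_sum.intros derivative_intros)
  qed
  with that show ?thesis by blast
qed

lemma weighted_poly_sum_tendsto_0:
  assumes "weighted_poly_sum A B j f" "real j < A" "real j < B"
  shows "(f \<longlongrightarrow> 0) (at_right 0)" "(f \<longlongrightarrow> 0) (at_left 1)"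
proof -
  from assms have "(f \<longlongrightarrow> 0) (at_right 0) \<and> (f \<longlongrightarrow> 0) (at_left 1)"
  proof (induction rule: weighted_poly_sum.induct)
    case (basic u j v p)
    have uv: "real u < B" "real v < A" using basic by auto
    have "\<forall>\<^sub>F t in at_right 0. 0 \<le> (t::real)"
      by (rule eventually_at_rightI[of _ 1]) auto
    then have "((\<lambda>t. poly p t * t powr (B - real u) * (1 - t) powr (A - real v)) \<longlongrightarrow>
        poly p 0 * 0 * (1 - 0) powr (A - real v)) (at_right 0)"
      using uv by (intro tendsto_intros tendsto_zero_powrI) (auto intro!: tendsto_intros)
    moreover have "\<forall>\<^sub>F t in at_left 1. 0 \<le> 1 - (t::real)"
      by (rule eventually_at_leftI[of 0]) auto
    then have "((\<lambda>t. poly p t * t powr (B - real u) * (1 - t) powr (A - real v)) \<longlongrightarrow>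
        poly p 1 * 1 powr (B - real u) * 0) (at_left 1)"
      using uv by (intro tendsto_intros tendsto_zero_powrI) (auto intro!: tendsto_eq_intros)
    ultimately show ?case by (simp add: weighted_poly_term_def [abs_def])
  next
    case (add j f g)
    then show ?case using tendsto_add[of f 0 _ g 0] by auto
  qed
  then show "(f \<longlongrightarrow> 0) (at_right 0)" "(f \<longlongrightarrow> 0) (at_left 1)" by auto
qed

lemma weighted_poly_sum_jacobi: "weighted_poly_sum A B 0 (\<lambda>t. jweight A B t * jacobiP A B i t)"
proof -
  define p where "p = (\<Sum>s = 0..i. smult (((real i + A) gchoose s) * ((real i + B) gchoose (i - s)))
                   ([:-1, 1:] ^ (i - s) * [:0, 1:] ^ s))"
  have "(\<lambda>t. jweight A B t * jacobiP A B i t) = weighted_poly_term A B p 0 0"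
    by (simp add: fun_eq_iff p_def jweight_def jacobiP_def weighted_poly_term_def
        poly_sum poly_power algebra_simps)
  then show ?thesis by (simp add: weighted_poly_sum.basic)
qed

lemma higher_deriv_weighted_poly_sum:
  assumes "weighted_poly_sum A B 0 F"
  obtains g where "weighted_poly_sum A B j g" "\<And>t. t \<in> {0<..<1} \<Longrightarrow> (deriv ^^ j) F t = g t"
proof (induction j arbitrary: thesis)
  case 0
  show ?case using assms by (intro 0) auto
next
  case (Suc j)
  obtain g where g: "weighted_poly_sum A B j g" "\<And>t. t \<in> {0<..<1} \<Longrightarrow> (deriv ^^ j) F t = g t"
    using Suc.IH by blast
  obtain g' where g': "weighted_poly_sum A B (Suc j) g'"
    "\<And>t. t \<in> {0<..<1} \<Longrightarrow> (g has_real_derivative g' t) (at t)"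
    using weighted_poly_sum_has_derivative[OF g(1)] by blast
  have "((deriv ^^ j) F has_real_derivative g' t) (at t)" if t: "t \<in> {0<..<1}" for t
    by (rule has_field_derivative_transform_within_open[OF g'(2)[OF t] _ t]) (use g(2) in auto)
  then show ?case by (intro Suc.prems[OF g'(1)]) (simp add: DERIV_imp_deriv)
qed

lemma higher_deriv_weighted_poly_sum_has_derivative:
  assumes "weighted_poly_sum A B 0 F" "t \<in> {0<..<1}"
  shows "((deriv ^^ j) F has_real_derivative (deriv ^^ Suc j) F t) (at t)"
proof -
  obtain g g' where g: "weighted_poly_sum A B (Suc j) g'"
      "\<And>t. t \<in> {0<..<1} \<Longrightarrow> (deriv ^^ j) F t = g t"
      "\<And>t. t \<in> {0<..<1} \<Longrightarrow> (g has_real_derivative g' t) (at t)"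
    by (metis higher_deriv_weighted_poly_sum[OF assms(1)] weighted_poly_sum_has_derivative)
  have "((deriv ^^ j) F has_real_derivative g' t) (at t)"
    by (rule has_field_derivative_transform_within_open[OF g(3)[OF assms(2)] _ assms(2)])
       (use g(2) in auto)
  then show ?thesis by (simp add: DERIV_imp_deriv)
qed

lemma higher_deriv_weighted_poly_sum_tendsto_0:
  assumes "weighted_poly_sum A B 0 F" "real j < A" "real j < B"
  shows "((deriv ^^ j) F \<longlongrightarrow> 0) (at_right 0)" "((deriv ^^ j) F \<longlongrightarrow> 0) (at_left 1)"
proof -
  obtain g where g: "weighted_poly_sum A B j g" "\<And>t. t \<in> {0<..<1} \<Longrightarrow> (deriv ^^ j) F t = g t"
    using higher_deriv_weighted_poly_sum[OF assms(1)] by blast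
  have "\<forall>\<^sub>F t in at_right 0. g t = (deriv ^^ j) F t" "\<forall>\<^sub>F t in at_left 1. g t = (deriv ^^ j) F t"
    using g(2) by (auto intro: eventually_at_rightI[of _ 1] eventually_at_leftI[of 0])
  then show "((deriv ^^ j) F \<longlongrightarrow> 0) (at_right 0)" "((deriv ^^ j) F \<longlongrightarrow> 0) (at_left 1)"
    using weighted_poly_sum_tendsto_0[OF g(1) assms(2,3)] tendsto_cong by blast+
qed

lemma continuous_on_jacobi_kernel: "continuous_on {0<..<1} (jacobi_kernel n N \<mu> \<kappa> \<xi> \<beta> T)"
proof -
  have cont: "continuous_on {0<..<1} ((deriv ^^ n) F)" if "weighted_poly_sum A B 0 F" for A B F
    using higher_deriv_weighted_poly_sum_has_derivative[OF that] DERIV_isCont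
    by (blast intro: continuous_at_imp_continuous_on)
  show ?thesis
    unfolding jacobi_kernel_def [abs_def]
    by (intro continuous_intros cont[OF weighted_poly_sum_jacobi])
qed

definition ibp_primitive :: "nat \<Rightarrow> (real \<Rightarrow> real) \<Rightarrow> real poly \<Rightarrow> real \<Rightarrow> real" where
  "ibp_primitive n F q t = (\<Sum>k<n. (-1) ^ k * (deriv ^^ (n - 1 - k)) F t * poly ((pderiv ^^ k) q) t)"

lemma ibp_primitive_has_derivative:
  assumes F: "weighted_poly_sum A B 0 F" and q: "degree q < n" and t: "t \<in> {0<..<1}"
  shows "(ibp_primitive n F q has_real_derivative (deriv ^^ n) F t * poly q t) (at t)"
proof -
  let ?T = "\<lambda>k. (-1) ^ k * (deriv ^^ (n - k)) F t * poly ((pderiv ^^ k) q) t"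
  have "((\<lambda>t. (-1) ^ k * (deriv ^^ (n - 1 - k)) F t * poly ((pderiv ^^ k) q) t) has_real_derivative
           ?T k - ?T (Suc k)) (at t)" if k: "k < n" for k
  proof -
    have e: "Suc (n - 1 - k) = n - k" using k by simp
    have h1: "((deriv ^^ (n - 1 - k)) F has_real_derivative (deriv ^^ (n - k)) F t) (at t)"
      using higher_deriv_weighted_poly_sum_has_derivative[OF F t, of "n - 1 - k"] unfolding e .
    have h2: "((\<lambda>t. poly ((pderiv ^^ k) q) t) has_real_derivative poly ((pderiv ^^ Suc k) q) t) (at t)"
      using poly_DERIV[of "(pderiv ^^ k) q" t] by simp
    have e2: "n - Suc k = n - 1 - k" by simp
    show ?thesis
      using DERIV_mult[OF DERIV_cmult[OF h1, of "(-1) ^ k"] h2] unfolding e2 by (simp add: field_simps)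
  qed
  then have "(ibp_primitive n F q has_real_derivative (\<Sum>k<n. ?T k - ?T (Suc k))) (at t)"
    unfolding ibp_primitive_def [abs_def] by (intro DERIV_sum) auto
  moreover have "(\<Sum>k<n. ?T k - ?T (Suc k)) = (deriv ^^ n) F t * poly q t"
    using higher_pderiv_eq_0_of_degree_less[OF q]
    by (subst sum_lessThan_telescope') (simp only: poly_0 mult_zero_right diff_zero power_0 mult_1 funpow_0)
  ultimately show ?thesis by simp
qed

lemma ibp_primitive_tendsto_0:
  assumes F: "weighted_poly_sum A B 0 F" and "real n < A + 1" "real n < B + 1"
  shows "(ibp_primitive n F q \<longlongrightarrow> 0) (at_right 0)" "(ibp_primitive n F q \<longlongrightarrow> 0) (at_left 1)"
proof -
  have l: "((deriv ^^ (n - 1 - k)) F \<longlongrightarrow> 0) (at_right 0)" "((deriv ^^ (n - 1 - k)) F \<longlongrightarrow> 0) (at_left 1)"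
    if "k < n" for k
    using higher_deriv_weighted_poly_sum_tendsto_0[OF F, of "n - 1 - k"] assms that by auto
  have "((\<lambda>t. \<Sum>k<n. (-1) ^ k * (deriv ^^ (n - 1 - k)) F t * poly ((pderiv ^^ k) q) t) \<longlongrightarrow>
          (\<Sum>k<n. (-1) ^ k * 0 * poly ((pderiv ^^ k) q) 0)) (at_right 0)"
    by (intro tendsto_sum tendsto_mult tendsto_const tendsto_poly) (use l in auto)
  moreover have "((\<lambda>t. \<Sum>k<n. (-1) ^ k * (deriv ^^ (n - 1 - k)) F t * poly ((pderiv ^^ k) q) t) \<longlongrightarrow>
          (\<Sum>k<n. (-1) ^ k * 0 * poly ((pderiv ^^ k) q) 1)) (at_left 1)"
    by (intro tendsto_sum tendsto_mult tendsto_const tendsto_poly) (use l in auto)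
  ultimately show "(ibp_primitive n F q \<longlongrightarrow> 0) (at_right 0)" "(ibp_primitive n F q \<longlongrightarrow> 0) (at_left 1)"
    unfolding ibp_primitive_def [abs_def] by simp_all
qed

lemma has_integral_ibp_primitive:
  assumes F: "weighted_poly_sum A B 0 F" and q: "degree q < n" and ab: "0 < a" "a \<le> b" "b < 1"
  shows "((\<lambda>t. (deriv ^^ n) F t * poly q t) has_integral ibp_primitive n F q b - ibp_primitive n F q a) {a..b}"
proof (rule fundamental_theorem_of_calculus[OF ab(2)])
  fix x assume "x \<in> {a..b}"
  with ab have "x \<in> {0<..<1}" by auto
  from ibp_primitive_has_derivative[OF F q this]
  show "(ibp_primitive n F q has_vector_derivative (deriv ^^ n) F x * poly q x) (at x within {a..b})"
    by (simp add: has_real_derivative_iff_has_vector_derivative has_vector_derivative_at_within)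
qed

lemma eventually_interval_near_0_1:
  assumes "\<delta> > 0"
  shows "\<forall>\<^sub>F x in at_right 0 \<times>\<^sub>F at_left 1.
           0 < fst x \<and> fst x < \<delta> \<and> 1 - \<delta> < snd x \<and> snd x < (1::real) \<and> fst x \<le> snd x"
proof -
  have "\<forall>\<^sub>F a in at_right 0. 0 < a \<and> a < min \<delta> (1/2::real)"
    using assms by (auto simp: eventually_at_right_field intro!: exI[of _ "min \<delta> (1/2)"])
  moreover have "\<forall>\<^sub>F b in at_left 1. max (1 - \<delta>) (1/2) < b \<and> b < (1::real)"
    using assms by (auto simp: eventually_at_left_field intro!: exI[of _ "max (1 - \<delta>) (1/2)"])
  ultimately show ?thesis
    unfolding eventually_prod_filter
    by (intro exI[of _ "\<lambda>a. 0 < a \<and> a < min \<delta> (1/2)"] exI[of _ "\<lambda>b. max (1 - \<delta>) (1/2) < b \<and> b < 1"])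
      auto
qed

lemma integral_tendsto_0_of_primitive:
  fixes f G :: "real \<Rightarrow> real"
  assumes G0: "(G \<longlongrightarrow> 0) (at_right 0)" and G1: "(G \<longlongrightarrow> 0) (at_left 1)"
    and f: "\<And>a b. 0 < a \<Longrightarrow> a \<le> b \<Longrightarrow> b < 1 \<Longrightarrow> (f has_integral G b - G a) {a..b}"
  shows "((\<lambda>(a, b). integral {a..b} f) \<longlongrightarrow> 0) (at_right 0 \<times>\<^sub>F at_left 1)"
proof -
  have "\<forall>\<^sub>F x in at_right 0 \<times>\<^sub>F at_left 1. G (snd x) - G (fst x) = integral {fst x..snd x} f"
    using eventually_interval_near_0_1[OF zero_less_one]
    by (rule eventually_mono) (auto intro: integral_unique[symmetric] f)
  moreover have "((\<lambda>x. G (snd x) - G (fst x)) \<longlongrightarrow> 0 - 0) (at_right 0 \<times>\<^sub>F at_left 1)"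
    by (intro tendsto_diff filterlim_compose[OF G1 filterlim_snd] filterlim_compose[OF G0 filterlim_fst])
  ultimately show ?thesis
    unfolding case_prod_unfold by (simp add: Lim_transform_eventually)
qed

lemma jacobi_kernel_poly_integral_tendsto_0:
  assumes "\<kappa> > -1" "\<mu> > -1" and q: "degree q < n"
  shows "((\<lambda>(a, b). integral {a..b} (\<lambda>\<tau>. jacobi_kernel n N \<mu> \<kappa> \<xi> \<beta> T \<tau> * poly q \<tau>))
            \<longlongrightarrow> 0) (at_right 0 \<times>\<^sub>F at_left 1)"
proof -
  define A where "A = \<mu> + real n"
  define B where "B = \<kappa> + real n"
  define c where "c i = (-1) ^ n / (\<beta> * T) ^ n * (jacobiP A B i \<xi> / jnorm2 A B i)" for i
  define F where "F i = (\<lambda>t. jweight A B t * jacobiP A B i t)" for i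
  define G where "G \<tau> = (\<Sum>i = 0..N - n. c i * ibp_primitive n (F i) q \<tau>)" for \<tau>
  have F: "weighted_poly_sum A B 0 (F i)" for i
    unfolding F_def by (rule weighted_poly_sum_jacobi)
  have AB: "real n < A + 1" "real n < B + 1"
    using assms by (auto simp: A_def B_def)
  have kernel: "jacobi_kernel n N \<mu> \<kappa> \<xi> \<beta> T \<tau> * poly q \<tau> =
      (\<Sum>i = 0..N - n. c i * ((deriv ^^ n) (F i) \<tau> * poly q \<tau>))" for \<tau>
    unfolding jacobi_kernel_def c_def F_def A_def B_def
    by (simp only: sum_distrib_left sum_distrib_right mult.assoc)
  show ?thesis
  proof (rule integral_tendsto_0_of_primitive)
    show "(G \<longlongrightarrow> 0) (at_right 0)" "(G \<longlongrightarrow> 0) (at_left 1)"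
      unfolding G_def [abs_def] using ibp_primitive_tendsto_0[OF F AB]
      by (auto intro!: tendsto_null_sum tendsto_mult_right_zero)
    fix a b :: real assume "0 < a" "a \<le> b" "b < 1"
    then have "((\<lambda>\<tau>. \<Sum>i = 0..N - n. c i * ((deriv ^^ n) (F i) \<tau> * poly q \<tau>)) has_integral
        (\<Sum>i = 0..N - n. c i * (ibp_primitive n (F i) q b - ibp_primitive n (F i) q a))) {a..b}"
      by (intro has_integral_sum finite_atLeastAtMost has_integral_mult_right
          has_integral_ibp_primitive[OF F q])
    then show "((\<lambda>\<tau>. jacobi_kernel n N \<mu> \<kappa> \<xi> \<beta> T \<tau> * poly q \<tau>) has_integral G b - G a) {a..b}"
      unfolding kernel G_def by (simp add: algebra_simps sum_subtractf)
  qed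
qed

lemma content_mult_integral_diff_le:
  fixes f :: "real \<Rightarrow> real"
  assumes "f integrable_on {u..v}" "0 \<le> e" and osc: "\<And>y. y \<in> {u..v} \<Longrightarrow> \<bar>f t - f y\<bar> \<le> e"
  shows "\<bar>content {u..v} * f t - integral {u..v} f\<bar> \<le> e * content {u..v}"
proof -
  have "((\<lambda>y. f t - f y) has_integral content {u..v} * f t - integral {u..v} f) {u..v}"
    using has_integral_diff[OF has_integral_const_real[of "f t" u v] integrable_integral[OF assms(1)]]
    by simp
  from has_integral_bound[OF assms(2) this[folded box_real(2)]] osc show ?thesis by simp
qed

lemma Riemann_sum_approx_integral_continuous:
  fixes f :: "real \<Rightarrow> real"
  assumes cf: "continuous_on {a..b} f" and e: "e > 0"
  obtains \<delta> where "\<delta> > 0" "\<And>D. D tagged_division_of {a..b} \<Longrightarrow> (\<lambda>x. ball x \<delta>) fine D \<Longrightarrow>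
           \<bar>(\<Sum>(t, K)\<in>D. content K * f t) - integral {a..b} f\<bar> \<le> e"
proof -
  define e' where "e' = e / (content {a..b} + 1)"
  have e': "e' > 0" using e by (simp add: e'_def add_nonneg_pos)
  obtain \<delta> where \<delta>: "\<delta> > 0"
    and d: "\<And>x x'. x \<in> {a..b} \<Longrightarrow> x' \<in> {a..b} \<Longrightarrow> dist x' x < \<delta> \<Longrightarrow> dist (f x') (f x) < e'"
    using compact_uniformly_continuous[OF cf compact_Icc] e' unfolding uniformly_continuous_on_def by metis
  have "\<bar>(\<Sum>(t, K)\<in>D. content K * f t) - integral {a..b} f\<bar> \<le> e"
    if D: "D tagged_division_of {a..b}" "(\<lambda>x. ball x \<delta>) fine D" for D
  proof -
    have fi: "f integrable_on {a..b}" using cf by (simp add: integrable_continuous_real)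
    have Dc: "D tagged_division_of cbox a b" using D(1) by simp
    have each: "\<bar>content K * f t - integral K f\<bar> \<le> e' * content K" if tK: "(t, K) \<in> D" for t K
    proof -
      obtain u v where "K = cbox u v" using tagged_division_ofD(4)[OF D(1) tK] by blast
      then have K: "K = {u..v}" by simp
      have tK': "t \<in> K" "K \<subseteq> {a..b}" "K \<subseteq> ball t \<delta>"
        using tagged_division_ofD(2,3)[OF D(1) tK] D(2) tK by (auto simp: fine_def)
      have "\<bar>f t - f y\<bar> \<le> e'" if "y \<in> {u..v}" for y
      proof -
        have "y \<in> {a..b}" "t \<in> {a..b}" "dist y t < \<delta>"
          using that tK' K by (auto simp: dist_commute subset_iff)
        then show ?thesis using d[of t y] by (simp add: dist_real_def abs_minus_commute)
      qed
      then show ?thesis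
        unfolding K using integrable_on_subinterval[OF fi] tK'(2) K e'
        by (intro content_mult_integral_diff_le) auto
    qed
    have "\<bar>(\<Sum>(t, K)\<in>D. content K * f t) - integral {a..b} f\<bar> =
          \<bar>\<Sum>(t, K)\<in>D. content K * f t - integral K f\<bar>"
      using integral_combine_tagged_division_topdown[OF fi[folded box_real(2)] Dc]
      by (simp add: sum_subtractf case_prod_unfold)
    also have "\<dots> \<le> (\<Sum>(t, K)\<in>D. e' * content K)"
      by (rule order_trans[OF sum_abs sum_mono]) (use each in auto)
    also have "\<dots> = e' * content {a..b}"
      using additive_content_tagged_division[OF Dc]
      by (simp add: sum_distrib_left[symmetric] case_prod_unfold del: content_real_if)
    also have "\<dots> \<le> e"
      using e by (simp add: e'_def field_simps)
    finally show ?thesis .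
  qed
  with \<delta> that show ?thesis by blast
qed

definition mean_square :: "'a measure \<Rightarrow> ('a \<Rightarrow> real) \<Rightarrow> ennreal" where
  "mean_square M f = (\<integral>\<^sup>+ x. ennreal ((f x)\<^sup>2) \<partial>M)"

lemma mean_square_add_le:
  assumes [measurable]: "f \<in> borel_measurable M" "g \<in> borel_measurable M"
  shows "mean_square M (\<lambda>x. f x + g x) \<le> 2 * mean_square M f + 2 * mean_square M g"
proof -
  have "ennreal ((f x + g x)\<^sup>2) \<le> 2 * ennreal ((f x)\<^sup>2) + 2 * ennreal ((g x)\<^sup>2)" for x
  proof -
    have "(f x + g x)\<^sup>2 \<le> 2 * (f x)\<^sup>2 + 2 * (g x)\<^sup>2"
      using sum_squares_ge_zero[of "f x - g x" 0] by (simp add: power2_eq_square algebra_simps)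
    then have "ennreal ((f x + g x)\<^sup>2) \<le> ennreal (2 * (f x)\<^sup>2 + 2 * (g x)\<^sup>2)"
      by (rule ennreal_leI)
    also have "\<dots> = 2 * ennreal ((f x)\<^sup>2) + 2 * ennreal ((g x)\<^sup>2)"
      by (simp add: ennreal_mult ennreal_plus)
    finally show ?thesis .
  qed
  then have "mean_square M (\<lambda>x. f x + g x) \<le> (\<integral>\<^sup>+ x. 2 * ennreal ((f x)\<^sup>2) + 2 * ennreal ((g x)\<^sup>2) \<partial>M)"
    unfolding mean_square_def by (intro nn_integral_mono)
  also have "\<dots> = 2 * mean_square M f + 2 * mean_square M g"
    unfolding mean_square_def by (simp add: nn_integral_add nn_integral_cmult)
  finally show ?thesis .
qed

lemma mean_square_cong_AE: "AE x in M. f x = g x \<Longrightarrow> mean_square M f = mean_square M g"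
  unfolding mean_square_def by (rule nn_integral_cong_AE) auto

lemma mean_square_affine_le:
  assumes "prob_space M" and [measurable]: "U \<in> borel_measurable M"
    and u: "mean_square M U = ennreal u" "u \<ge> 0"
  shows "mean_square M (\<lambda>x. \<alpha> + \<beta> * U x) \<le> ennreal (2 * \<alpha>\<^sup>2 + 2 * \<beta>\<^sup>2 * u)"
proof -
  have "mean_square M (\<lambda>x. \<alpha> + \<beta> * U x) \<le> 2 * mean_square M (\<lambda>x. \<alpha>) + 2 * mean_square M (\<lambda>x. \<beta> * U x)"
    by (rule mean_square_add_le) auto
  also have "mean_square M (\<lambda>x. \<alpha>) = ennreal (\<alpha>\<^sup>2)"
    using prob_space.emeasure_space_1[OF assms(1)] by (simp add: mean_square_def)
  also have "mean_square M (\<lambda>x. \<beta> * U x) = ennreal (\<beta>\<^sup>2) * ennreal u"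
    unfolding mean_square_def u(1)[symmetric]
    by (simp add: power_mult_distrib ennreal_mult nn_integral_cmult mean_square_def)
  also have "2 * ennreal (\<alpha>\<^sup>2) + 2 * (ennreal (\<beta>\<^sup>2) * ennreal u) = ennreal (2 * \<alpha>\<^sup>2 + 2 * \<beta>\<^sup>2 * u)"
    using u(2) by (simp add: ennreal_mult ennreal_plus mult.assoc)
  finally show ?thesis .
qed

lemma mean_square_le_of_affine_approx:
  assumes P: "prob_space M" and [measurable]: "U \<in> borel_measurable M" "Z \<in> borel_measurable M"
    and u: "mean_square M U = ennreal u" "u \<ge> 0"
    and \<epsilon>: "\<epsilon> \<le> 1" "\<bar>\<alpha>\<bar> \<le> \<epsilon>" "\<bar>\<beta>\<bar> \<le> \<epsilon>"
    and close: "mean_square M (\<lambda>x. Z x - (\<alpha> + \<beta> * U x)) \<le> ennreal \<epsilon>"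
  shows "mean_square M Z \<le> ennreal (\<epsilon> * (6 + 4 * u))"
proof -
  have "\<alpha>\<^sup>2 \<le> \<epsilon>" "\<beta>\<^sup>2 \<le> \<epsilon>"
    using \<epsilon> abs_le_square_iff[of _ \<epsilon>] by (smt (verit) mult_left_le power2_eq_square)+
  then have small: "2 * \<epsilon> + 2 * (2 * \<alpha>\<^sup>2 + 2 * \<beta>\<^sup>2 * u) \<le> \<epsilon> * (6 + 4 * u)"
    using u(2) mult_right_mono[of "\<beta>\<^sup>2" \<epsilon> u] by (simp add: algebra_simps)
  have "mean_square M Z = mean_square M (\<lambda>x. (Z x - (\<alpha> + \<beta> * U x)) + (\<alpha> + \<beta> * U x))"
    by simp
  also have "\<dots> \<le> 2 * mean_square M (\<lambda>x. Z x - (\<alpha> + \<beta> * U x)) + 2 * mean_square M (\<lambda>x. \<alpha> + \<beta> * U x)"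
    by (rule mean_square_add_le) auto
  also have "\<dots> \<le> 2 * ennreal \<epsilon> + 2 * ennreal (2 * \<alpha>\<^sup>2 + 2 * \<beta>\<^sup>2 * u)"
    using close mean_square_affine_le[OF P _ u] by (intro add_mono mult_left_mono) auto
  also have "\<dots> = ennreal (2 * \<epsilon> + 2 * (2 * \<alpha>\<^sup>2 + 2 * \<beta>\<^sup>2 * u))"
    using \<epsilon> u(2) by (simp add: ennreal_mult ennreal_plus mult.assoc)
  also have "\<dots> \<le> ennreal (\<epsilon> * (6 + 4 * u))"
    using small by (rule ennreal_leI)
  finally show ?thesis .
qed

lemma AE_eq_0_of_mean_square_approx:
  assumes P: "prob_space M" and [measurable]: "U \<in> borel_measurable M" "Z \<in> borel_measurable M"
    and U: "integrable M (\<lambda>x. (U x)\<^sup>2)"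
    and approx: "\<And>\<epsilon>. 0 < \<epsilon> \<Longrightarrow> \<exists>\<alpha> \<beta>. \<bar>\<alpha>\<bar> \<le> \<epsilon> \<and> \<bar>\<beta>\<bar> \<le> \<epsilon> \<and>
                   mean_square M (\<lambda>x. Z x - (\<alpha> + \<beta> * U x)) \<le> ennreal \<epsilon>"
  shows "AE x in M. Z x = 0"
proof -
  obtain u where u: "mean_square M U = ennreal u" "u \<ge> 0"
    using integrableD(2)[OF U] by (cases "mean_square M U") (auto simp: mean_square_def)
  have "mean_square M Z \<le> 0"
  proof (rule ennreal_le_epsilon)
    fix e :: real assume e: "0 < e"
    define \<epsilon> where "\<epsilon> = min 1 (e / (6 + 4 * u))"
    have pos: "0 < 6 + 4 * u" using u(2) by simp
    have "\<epsilon> \<le> e / (6 + 4 * u)" by (simp add: \<epsilon>_def)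
    with pos have bound: "\<epsilon> * (6 + 4 * u) \<le> e" by (simp add: pos_le_divide_eq)
    have "0 < \<epsilon>" "\<epsilon> \<le> 1" using e pos by (simp_all add: \<epsilon>_def)
    then obtain \<alpha> \<beta> where \<alpha>\<beta>: "\<bar>\<alpha>\<bar> \<le> \<epsilon>" "\<bar>\<beta>\<bar> \<le> \<epsilon>"
      and close: "mean_square M (\<lambda>x. Z x - (\<alpha> + \<beta> * U x)) \<le> ennreal \<epsilon>"
      using approx by blast
    have "mean_square M Z \<le> ennreal (\<epsilon> * (6 + 4 * u))"
      by (rule mean_square_le_of_affine_approx[OF P _ _ u \<open>\<epsilon> \<le> 1\<close> \<alpha>\<beta> close]) simp_all
    also have "\<dots> \<le> ennreal e"
      using bound by (rule ennreal_leI)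
    finally show "mean_square M Z \<le> 0 + ennreal e" by simp
  qed
  then have "mean_square M Z = 0" by simp
  then have "AE x in M. ennreal ((Z x)\<^sup>2) = 0"
    unfolding mean_square_def by (subst (asm) nn_integral_0_iff_AE) auto
  then show ?thesis by eventually_elim simp
qed

lemma integrable_mult_of_square_integrable:
  fixes f g :: "'a \<Rightarrow> real"
  assumes [measurable]: "f \<in> borel_measurable M" "g \<in> borel_measurable M"
    and "integrable M (\<lambda>x. (f x)\<^sup>2)" "integrable M (\<lambda>x. (g x)\<^sup>2)"
  shows "integrable M (\<lambda>x. f x * g x)"
proof (rule Bochner_Integration.integrable_bound)
  show "integrable M (\<lambda>x. (f x)\<^sup>2 + (g x)\<^sup>2)" using assms by auto
  show "AE x in M. norm (f x * g x) \<le> norm ((f x)\<^sup>2 + (g x)\<^sup>2)"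
  proof (intro AE_I2)
    fix x
    have "2 * \<bar>f x\<bar> * \<bar>g x\<bar> \<le> (f x)\<^sup>2 + (g x)\<^sup>2"
      using sum_squares_ge_zero[of "\<bar>f x\<bar> - \<bar>g x\<bar>" 0] by (simp add: power2_eq_square algebra_simps)
    moreover have "0 \<le> \<bar>f x\<bar> * \<bar>g x\<bar>" by simp
    ultimately have "\<bar>f x\<bar> * \<bar>g x\<bar> \<le> (f x)\<^sup>2 + (g x)\<^sup>2" by linarith
    then show "norm (f x * g x) \<le> norm ((f x)\<^sup>2 + (g x)\<^sup>2)"
      by (simp add: abs_mult)
  qed
qed measurable

lemma symmetric_product_rank_one:
  fixes F G :: "real \<Rightarrow> real" and cv :: "real \<Rightarrow> real \<Rightarrow> real"
  assumes sym: "\<And>s \<tau>. s \<in> I \<Longrightarrow> \<tau> \<in> I \<Longrightarrow> cv s \<tau> = cv \<tau> s"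
    and prod: "\<And>s \<tau>. s \<in> I \<Longrightarrow> \<tau> \<in> I \<Longrightarrow> cv s \<tau> = F \<tau> * G s"
  obtains c where "\<And>s \<tau>. s \<in> I \<Longrightarrow> \<tau> \<in> I \<Longrightarrow> cv s \<tau> = c * G s * G \<tau>"
proof (cases "\<exists>\<tau>1\<in>I. G \<tau>1 \<noteq> 0")
  case True
  then obtain \<tau>1 where \<tau>1: "\<tau>1 \<in> I" "G \<tau>1 \<noteq> 0" by blast
  have "F \<tau> = F \<tau>1 / G \<tau>1 * G \<tau>" if "\<tau> \<in> I" for \<tau>
    using sym[OF that \<tau>1(1)] prod[OF that \<tau>1(1)] prod[OF \<tau>1(1) that] \<tau>1(2)
    by (simp add: field_simps)
  then show ?thesis using prod by (intro that[of "F \<tau>1 / G \<tau>1"]) auto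
next
  case False
  then show ?thesis using prod by (intro that[of 0]) auto
qed

lemma square_integrable_diff_const:
  fixes f :: "'a \<Rightarrow> real"
  assumes "prob_space M" and [measurable]: "f \<in> borel_measurable M" and sq: "integrable M (\<lambda>x. (f x)\<^sup>2)"
  shows "integrable M (\<lambda>x. (f x - c)\<^sup>2)"
proof -
  interpret prob_space M by fact
  have "integrable M f" by (rule square_integrable_imp_integrable) (use sq in auto)
  then have "integrable M (\<lambda>x. (f x)\<^sup>2 - 2 * c * f x + c\<^sup>2)"
    using sq by auto
  then show ?thesis by (simp add: power2_diff algebra_simps)
qed

lemma AE_centered_eq_of_variance_eq_0:
  fixes V W :: "'a \<Rightarrow> real"
  assumes P: "prob_space M" and [measurable]: "V \<in> borel_measurable M" "W \<in> borel_measurable M"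
    and V: "integrable M (\<lambda>x. (V x)\<^sup>2)" and W: "integrable M (\<lambda>x. (W x)\<^sup>2)"
    and var: "covar M V V - 2 * r * covar M V W + r\<^sup>2 * covar M W W = 0"
  shows "AE x in M. V x - mean M V = r * (W x - mean M W)"
proof -
  define X where "X x = V x - mean M V" for x
  define Y where "Y x = W x - mean M W" for x
  have [measurable]: "X \<in> borel_measurable M" "Y \<in> borel_measurable M"
    unfolding X_def Y_def by measurable
  have X: "integrable M (\<lambda>x. (X x)\<^sup>2)" and Y: "integrable M (\<lambda>x. (Y x)\<^sup>2)"
    unfolding X_def Y_def using square_integrable_diff_const[OF P] V W by auto
  then have XY: "integrable M (\<lambda>x. X x * Y x)"
    by (intro integrable_mult_of_square_integrable) auto
  have "(\<integral>x. (X x)\<^sup>2 - 2 * r * (X x * Y x) + r\<^sup>2 * (Y x)\<^sup>2 \<partial>M)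
      = (\<integral>x. (X x)\<^sup>2 \<partial>M) - 2 * r * (\<integral>x. X x * Y x \<partial>M) + r\<^sup>2 * (\<integral>x. (Y x)\<^sup>2 \<partial>M)"
    using X Y XY by simp
  also have "\<dots> = 0"
    using var unfolding covar_def X_def Y_def by (simp add: power2_eq_square)
  finally have "(\<integral>x. (X x - r * Y x)\<^sup>2 \<partial>M) = 0"
    by (simp add: power2_diff power_mult_distrib algebra_simps)
  moreover have "integrable M (\<lambda>x. (X x - r * Y x)\<^sup>2)"
  proof -
    have "integrable M (\<lambda>x. (X x)\<^sup>2 - 2 * r * (X x * Y x) + r\<^sup>2 * (Y x)\<^sup>2)"
      using X Y XY by auto
    then show ?thesis by (simp add: power2_diff power_mult_distrib algebra_simps)
  qed
  ultimately have "AE x in M. (X x - r * Y x)\<^sup>2 = 0"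
    by (simp add: integral_nonneg_eq_0_iff_AE)
  then show ?thesis by eventually_elim (simp add: X_def Y_def)
qed

lemma AE_affine_of_covar_rank_one:
  fixes w :: "real \<Rightarrow> 'a \<Rightarrow> real" and h :: "real \<Rightarrow> real"
  assumes P: "prob_space M"
    and meas[measurable]: "\<And>\<tau>. \<tau> \<in> I \<Longrightarrow> w \<tau> \<in> borel_measurable M"
    and sq: "\<And>\<tau>. \<tau> \<in> I \<Longrightarrow> integrable M (\<lambda>x. (w \<tau> x)\<^sup>2)"
    and cov: "\<And>s \<tau>. s \<in> I \<Longrightarrow> \<tau> \<in> I \<Longrightarrow> covar M (w s) (w \<tau>) = c * h s * h \<tau>"
  obtains U where "U \<in> borel_measurable M" "integrable M (\<lambda>x. (U x)\<^sup>2)"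
    "\<And>\<tau>. \<tau> \<in> I \<Longrightarrow> AE x in M. w \<tau> x = mean M (w \<tau>) + h \<tau> * U x"
proof -
  have proportional: "AE x in M. w \<tau> x - mean M (w \<tau>) = r * (w s x - mean M (w s))"
    if st: "\<tau> \<in> I" "s \<in> I" and r: "h \<tau> = r * h s" for \<tau> s r
  proof (rule AE_centered_eq_of_variance_eq_0[OF P meas meas sq sq])
    show "covar M (w \<tau>) (w \<tau>) - 2 * r * covar M (w \<tau>) (w s) + r\<^sup>2 * covar M (w s) (w s) = 0"
      using st by (simp add: cov r power2_eq_square algebra_simps)
  qed (use st in auto)
  show ?thesis
  proof (cases "\<exists>\<tau>1\<in>I. h \<tau>1 \<noteq> 0")
    case True
    then obtain \<tau>1 where \<tau>1: "\<tau>1 \<in> I" "h \<tau>1 \<noteq> 0" by blast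
    show ?thesis
    proof (rule that[of "\<lambda>x. (w \<tau>1 x - mean M (w \<tau>1)) / h \<tau>1"])
      show "(\<lambda>x. (w \<tau>1 x - mean M (w \<tau>1)) / h \<tau>1) \<in> borel_measurable M"
        using \<tau>1 by measurable
      show "integrable M (\<lambda>x. ((w \<tau>1 x - mean M (w \<tau>1)) / h \<tau>1)\<^sup>2)"
        using square_integrable_diff_const[OF P meas[OF \<tau>1(1)] sq[OF \<tau>1(1)]]
        by (simp add: power_divide)
      fix \<tau> assume "\<tau> \<in> I"
      with \<tau>1 have "AE x in M. w \<tau> x - mean M (w \<tau>) = h \<tau> / h \<tau>1 * (w \<tau>1 x - mean M (w \<tau>1))"
        by (intro proportional) auto
      then show "AE x in M. w \<tau> x = mean M (w \<tau>) + h \<tau> * ((w \<tau>1 x - mean M (w \<tau>1)) / h \<tau>1)"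
        by eventually_elim (use \<tau>1(2) in \<open>simp add: field_simps\<close>)
    qed
  next
    case False
    show ?thesis
    proof (rule that[of "\<lambda>x. 0"])
      fix \<tau> assume "\<tau> \<in> I"
      with False have "AE x in M. w \<tau> x - mean M (w \<tau>) = 0 * (w \<tau> x - mean M (w \<tau>))"
        by (intro proportional) auto
      then show "AE x in M. w \<tau> x = mean M (w \<tau>) + h \<tau> * 0"
        by eventually_elim simp
    qed auto
  qed
qed

lemma Riemann_sum_AE_affine:
  assumes D: "D tagged_division_of {a..b}"
    and W: "\<And>t. t \<in> {a..b} \<Longrightarrow> AE x in M. W t x = \<phi> t + \<psi> t * U x"
  shows "AE x in M. (\<Sum>(t, K)\<in>D. content K * (k t * W t x))
    = (\<Sum>(t, K)\<in>D. content K * (k t * \<phi> t)) + (\<Sum>(t, K)\<in>D. content K * (k t * \<psi> t)) * U x"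
proof -
  have "fst p \<in> {a..b}" if "p \<in> D" for p
    using tagged_division_ofD(2,3)[OF D, of "fst p" "snd p"] that by auto
  then have "AE x in M. \<forall>p\<in>D. W (fst p) x = \<phi> (fst p) + \<psi> (fst p) * U x"
    by (intro AE_finite_allI[OF tagged_division_of_finite[OF D]] W)
  then show ?thesis
  proof eventually_elim
    case (elim x)
    then have "(\<Sum>(t, K)\<in>D. content K * (k t * W t x))
        = (\<Sum>p\<in>D. content (snd p) * (k (fst p) * (\<phi> (fst p) + \<psi> (fst p) * U x)))"
      unfolding case_prod_unfold by (intro sum.cong) auto
    then show ?case
      unfolding case_prod_unfold by (simp add: sum.distrib sum_distrib_right distrib_left mult.assoc)
  qed
qed

lemma ms_riemann_integral_AE_affine:
  assumes P: "prob_space M" and [measurable]: "U \<in> borel_measurable M"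
    and U: "integrable M (\<lambda>x. (U x)\<^sup>2)"
    and W: "\<And>t. t \<in> {a..b} \<Longrightarrow> AE x in M. W t x = \<phi> t + \<psi> t * U x"
    and c\<phi>: "continuous_on {a..b} (\<lambda>t. k t * \<phi> t)" and c\<psi>: "continuous_on {a..b} (\<lambda>t. k t * \<psi> t)"
    and Y: "ms_riemann_integral M (\<lambda>\<tau> x. k \<tau> * W \<tau> x) a b Y"
  shows "AE x in M. Y x = integral {a..b} (\<lambda>t. k t * \<phi> t) + integral {a..b} (\<lambda>t. k t * \<psi> t) * U x"
proof -
  define A where "A = integral {a..b} (\<lambda>t. k t * \<phi> t)"
  define B where "B = integral {a..b} (\<lambda>t. k t * \<psi> t)"
  have [measurable]: "Y \<in> borel_measurable M" using Y by (simp add: ms_riemann_integral_def)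
  have "AE x in M. Y x - (A + B * U x) = 0"
  proof (rule AE_eq_0_of_mean_square_approx[OF P _ _ U])
    fix \<epsilon> :: real assume "0 < \<epsilon>"
    obtain \<delta>1 where "\<delta>1 > 0" and \<delta>1: "\<And>D. D tagged_division_of {a..b} \<Longrightarrow> (\<lambda>x. ball x \<delta>1) fine D \<Longrightarrow>
        \<bar>(\<Sum>(t, K)\<in>D. content K * (k t * \<phi> t)) - A\<bar> \<le> \<epsilon>"
      using Riemann_sum_approx_integral_continuous[OF c\<phi> \<open>0 < \<epsilon>\<close>] unfolding A_def by blast
    obtain \<delta>2 where "\<delta>2 > 0" and \<delta>2: "\<And>D. D tagged_division_of {a..b} \<Longrightarrow> (\<lambda>x. ball x \<delta>2) fine D \<Longrightarrow>
        \<bar>(\<Sum>(t, K)\<in>D. content K * (k t * \<psi> t)) - B\<bar> \<le> \<epsilon>"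
      using Riemann_sum_approx_integral_continuous[OF c\<psi> \<open>0 < \<epsilon>\<close>] unfolding B_def by blast
    obtain \<delta>3 where "\<delta>3 > 0" and \<delta>3: "\<And>D. D tagged_division_of {a..b} \<and> (\<lambda>x. ball x \<delta>3) fine D \<Longrightarrow>
        (\<integral>\<^sup>+ x. ennreal (((\<Sum>(t, K)\<in>D. content K * (k t * W t x)) - Y x)\<^sup>2) \<partial>M) < ennreal \<epsilon>"
      using Y \<open>0 < \<epsilon>\<close> unfolding ms_riemann_integral_def by blast
    obtain D where D: "D tagged_division_of {a..b}"
      and fine: "(\<lambda>x. ball x \<delta>1 \<inter> (ball x \<delta>2 \<inter> ball x \<delta>3)) fine D"
      using fine_division_exists_real[OF gauge_Int[OF gauge_ball[OF \<open>\<delta>1 > 0\<close>]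
          gauge_Int[OF gauge_ball[OF \<open>\<delta>2 > 0\<close>] gauge_ball[OF \<open>\<delta>3 > 0\<close>]]], of a b] .
    define R\<phi> where "R\<phi> = (\<Sum>(t, K)\<in>D. content K * (k t * \<phi> t))"
    define R\<psi> where "R\<psi> = (\<Sum>(t, K)\<in>D. content K * (k t * \<psi> t))"
    have "AE x in M. (\<Sum>(t, K)\<in>D. content K * (k t * W t x)) = R\<phi> + R\<psi> * U x"
      unfolding R\<phi>_def R\<psi>_def by (rule Riemann_sum_AE_affine[OF D W])
    then have "AE x in M. Y x - (A + B * U x) - ((R\<phi> - A) + (R\<psi> - B) * U x)
        = Y x - (\<Sum>(t, K)\<in>D. content K * (k t * W t x))"
      by eventually_elim (simp add: algebra_simps)
    then have "mean_square M (\<lambda>x. Y x - (A + B * U x) - ((R\<phi> - A) + (R\<psi> - B) * U x))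
        = mean_square M (\<lambda>x. Y x - (\<Sum>(t, K)\<in>D. content K * (k t * W t x)))"
      by (rule mean_square_cong_AE)
    also have "\<dots> \<le> ennreal \<epsilon>"
      using \<delta>3[of D] D fine unfolding fine_Int mean_square_def by (simp add: power2_commute)
    finally have "mean_square M (\<lambda>x. Y x - (A + B * U x) - ((R\<phi> - A) + (R\<psi> - B) * U x)) \<le> ennreal \<epsilon>" .
    moreover have "\<bar>R\<phi> - A\<bar> \<le> \<epsilon>" "\<bar>R\<psi> - B\<bar> \<le> \<epsilon>"
      using \<delta>1[OF D] \<delta>2[OF D] fine unfolding fine_Int R\<phi>_def R\<psi>_def by auto
    ultimately show "\<exists>\<alpha> \<beta>. \<bar>\<alpha>\<bar> \<le> \<epsilon> \<and> \<bar>\<beta>\<bar> \<le> \<epsilon> \<and>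
        mean_square M (\<lambda>x. Y x - (A + B * U x) - (\<alpha> + \<beta> * U x)) \<le> ennreal \<epsilon>"
      by blast
  qed measurable
  then show ?thesis by eventually_elim (simp add: A_def B_def)
qed

lemma ms_integral_01_AE_eq_0:
  assumes P: "prob_space M" and [measurable]: "U \<in> borel_measurable M"
    and U: "integrable M (\<lambda>x. (U x)\<^sup>2)"
    and W: "\<And>t. t \<in> {0..1} \<Longrightarrow> AE x in M. W t x = \<phi> t + \<psi> t * U x"
    and c\<phi>: "continuous_on {0<..<1} (\<lambda>t. k t * \<phi> t)" and c\<psi>: "continuous_on {0<..<1} (\<lambda>t. k t * \<psi> t)"
    and l\<phi>: "((\<lambda>(a, b). integral {a..b} (\<lambda>t. k t * \<phi> t)) \<longlongrightarrow> 0) (at_right 0 \<times>\<^sub>F at_left 1)"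
    and l\<psi>: "((\<lambda>(a, b). integral {a..b} (\<lambda>t. k t * \<psi> t)) \<longlongrightarrow> 0) (at_right 0 \<times>\<^sub>F at_left 1)"
    and X: "ms_integral_01 M (\<lambda>\<tau> x. k \<tau> * W \<tau> x) X"
  shows "AE x in M. X x = 0"
proof (rule AE_eq_0_of_mean_square_approx[OF P _ _ U])
  show "X \<in> borel_measurable M" using X by (simp add: ms_integral_01_def)
  fix \<epsilon> :: real assume "0 < \<epsilon>"
  obtain \<delta> where "\<delta> > 0" and \<delta>: "\<And>a b. 0 < a \<and> a < \<delta> \<and> 1 - \<delta> < b \<and> b < 1 \<Longrightarrow>
      (\<exists>Y. ms_riemann_integral M (\<lambda>\<tau> x. k \<tau> * W \<tau> x) a b Y) \<and>
      (\<forall>Y. ms_riemann_integral M (\<lambda>\<tau> x. k \<tau> * W \<tau> x) a b Y \<longrightarrow>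
            (\<integral>\<^sup>+ x. ennreal ((Y x - X x)\<^sup>2) \<partial>M) < ennreal \<epsilon>)"
    using X \<open>0 < \<epsilon>\<close> unfolding ms_integral_01_def by blast
  define F :: "(real \<times> real) filter" where "F = at_right 0 \<times>\<^sub>F at_left 1"
  have box: "\<forall>\<^sub>F x in F. 0 < fst x \<and> fst x < \<delta> \<and> 1 - \<delta> < snd x \<and> snd x < 1 \<and> fst x \<le> snd x"
    unfolding F_def using \<open>\<delta> > 0\<close> by (rule eventually_interval_near_0_1)
  moreover have small: "\<forall>\<^sub>F x in F. \<bar>integral {fst x..snd x} (\<lambda>t. k t * \<phi> t)\<bar> < \<epsilon>
      \<and> \<bar>integral {fst x..snd x} (\<lambda>t. k t * \<psi> t)\<bar> < \<epsilon>"
    using eventually_conj[OF tendstoD[OF l\<phi> \<open>0 < \<epsilon>\<close>] tendstoD[OF l\<psi> \<open>0 < \<epsilon>\<close>]]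
    unfolding F_def by (rule eventually_mono) (simp add: case_prod_unfold)
  moreover have "F \<noteq> bot" by (simp add: F_def prod_filter_eq_bot)
  ultimately obtain x where "0 < fst x \<and> fst x < \<delta> \<and> 1 - \<delta> < snd x \<and> snd x < 1 \<and> fst x \<le> snd x"
    "\<bar>integral {fst x..snd x} (\<lambda>t. k t * \<phi> t)\<bar> < \<epsilon>" "\<bar>integral {fst x..snd x} (\<lambda>t. k t * \<psi> t)\<bar> < \<epsilon>"
    using eventually_happens'[OF _ eventually_conj[OF box small]] by blast
  then obtain a b where ab: "0 < a" "a < \<delta>" "1 - \<delta> < b" "b < 1" "a \<le> b"
    and small: "\<bar>integral {a..b} (\<lambda>t. k t * \<phi> t)\<bar> < \<epsilon>" "\<bar>integral {a..b} (\<lambda>t. k t * \<psi> t)\<bar> < \<epsilon>"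
    by (cases x) auto
  obtain Y where Y: "ms_riemann_integral M (\<lambda>\<tau> x. k \<tau> * W \<tau> x) a b Y"
    and YX: "(\<integral>\<^sup>+ x. ennreal ((Y x - X x)\<^sup>2) \<partial>M) < ennreal \<epsilon>"
    using \<delta>[of a b] ab by blast
  have sub: "{a..b} \<subseteq> {0<..<1}" using ab by auto
  have "AE x in M. Y x = integral {a..b} (\<lambda>t. k t * \<phi> t) + integral {a..b} (\<lambda>t. k t * \<psi> t) * U x"
    using ab by (intro ms_riemann_integral_AE_affine[OF P _ U _ _ _ Y] W
        continuous_on_subset[OF c\<phi> sub] continuous_on_subset[OF c\<psi> sub]) auto
  then have "AE x in M. X x - (integral {a..b} (\<lambda>t. k t * \<phi> t)
      + integral {a..b} (\<lambda>t. k t * \<psi> t) * U x) = X x - Y x"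
    by eventually_elim simp
  then have "mean_square M (\<lambda>x. X x - (integral {a..b} (\<lambda>t. k t * \<phi> t)
      + integral {a..b} (\<lambda>t. k t * \<psi> t) * U x)) = mean_square M (\<lambda>x. X x - Y x)"
    by (rule mean_square_cong_AE)
  also have "\<dots> \<le> ennreal \<epsilon>"
    using YX by (simp add: mean_square_def power2_commute)
  finally show "\<exists>\<alpha> \<beta>. \<bar>\<alpha>\<bar> \<le> \<epsilon> \<and> \<bar>\<beta>\<bar> \<le> \<epsilon> \<and> mean_square M (\<lambda>x. X x - (\<alpha> + \<beta> * U x)) \<le> ennreal \<epsilon>"
    using small by (intro exI conjI) auto
qed measurable

lemma noise_C3_decomposition:
  assumes P: "prob_space M" and "noise_C1 M w" and "noise_C3 M w I n" and "I \<subseteq> {0..}"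
  obtains p q U where "degree p < n" "degree q < n"
    "U \<in> borel_measurable M" "integrable M (\<lambda>x. (U x)\<^sup>2)"
    "\<And>\<tau>. \<tau> \<in> I \<Longrightarrow> AE x in M. w \<tau> x = poly p \<tau> + poly q \<tau> * U x"
proof -
  obtain \<nu> \<eta> \<eta>' n1 n2 where n12: "min n1 n2 < n"
    and C3: "\<And>s \<tau>. s \<in> I \<Longrightarrow> \<tau> \<in> I \<Longrightarrow> mean M (w \<tau>) = (\<Sum>i<n. \<nu> i * \<tau> ^ i) \<and>
           covar M (w s) (w \<tau>) = (\<Sum>i\<le>n1. \<eta> i * \<tau> ^ i) * (\<Sum>i\<le>n2. \<eta>' i * s ^ i)"
    using assms(3) unfolding noise_C3_def by blast
  define p where "p = (\<Sum>i<n. monom (\<nu> i) i)"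
  define q1 where "q1 = (\<Sum>i<Suc n1. monom (\<eta> i) i)"
  define q2 where "q2 = (\<Sum>i<Suc n2. monom (\<eta>' i) i)"
  have mean: "mean M (w \<tau>) = poly p \<tau>" if "\<tau> \<in> I" for \<tau>
    using C3[OF that that] by (simp add: p_def poly_sum poly_monom)
  have cov: "covar M (w s) (w \<tau>) = poly q1 \<tau> * poly q2 s" if "s \<in> I" "\<tau> \<in> I" for s \<tau>
    using C3[OF that] by (simp add: q1_def q2_def poly_sum poly_monom lessThan_Suc_atMost)
  have sym: "covar M (w s) (w \<tau>) = covar M (w \<tau>) (w s)" for s \<tau>
    by (simp add: covar_def mult.commute)
  \<comment> \<open>By symmetry of the covariance, either factor of the product can be taken for both variables.\<close>
  obtain h c where h: "degree h < n"
    and hcov: "\<And>s \<tau>. s \<in> I \<Longrightarrow> \<tau> \<in> I \<Longrightarrow> covar M (w s) (w \<tau>) = c * poly h s * poly h \<tau>"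
  proof (cases "n2 < n")
    case True
    with degree_sum_monom_less[of "Suc n2" \<eta>'] have "degree q2 < n" by (simp add: q2_def)
    moreover obtain c where "\<And>s \<tau>. s \<in> I \<Longrightarrow> \<tau> \<in> I \<Longrightarrow> covar M (w s) (w \<tau>) = c * poly q2 s * poly q2 \<tau>"
      using symmetric_product_rank_one[of I "\<lambda>s \<tau>. covar M (w s) (w \<tau>)" "poly q1" "poly q2"] sym cov
      by blast
    ultimately show ?thesis by (rule that)
  next
    case False
    with n12 degree_sum_monom_less[of "Suc n1" \<eta>] have "degree q1 < n" by (simp add: q1_def)
    have swapped: "covar M (w s) (w \<tau>) = poly q2 \<tau> * poly q1 s" if "s \<in> I" "\<tau> \<in> I" for s \<tau>
      using cov[OF that(2,1)] sym by simp
    obtain c where "\<And>s \<tau>. s \<in> I \<Longrightarrow> \<tau> \<in> I \<Longrightarrow> covar M (w s) (w \<tau>) = c * poly q1 s * poly q1 \<tau>"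
      using symmetric_product_rank_one[of I "\<lambda>s \<tau>. covar M (w s) (w \<tau>)" "poly q2" "poly q1"] sym swapped
      by blast
    with \<open>degree q1 < n\<close> show ?thesis by (rule that)
  qed
  have w: "w \<tau> \<in> borel_measurable M" "integrable M (\<lambda>x. (w \<tau> x)\<^sup>2)" if "\<tau> \<in> I" for \<tau>
    using assms(2,4) that unfolding noise_C1_def by auto
  have "degree p < n"
    using n12 degree_sum_monom_less[of n \<nu>] by (simp add: p_def)
  show ?thesis
  proof (rule AE_affine_of_covar_rank_one[OF P w hcov])
    fix U assume U: "U \<in> borel_measurable M" "integrable M (\<lambda>x. (U x)\<^sup>2)"
      "\<And>\<tau>. \<tau> \<in> I \<Longrightarrow> AE x in M. w \<tau> x = mean M (w \<tau>) + poly h \<tau> * U x"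
    show thesis
      by (rule that[OF \<open>degree p < n\<close> h U(1,2)]) (use U(3) mean in simp)
  qed
qed

theorem theorem2:
  fixes M :: "'a measure" and w :: "real \<Rightarrow> 'a \<Rightarrow> real" and I :: "real set"
    and n N :: nat and \<beta> \<mu> \<kappa> \<xi> t0 T :: real and X :: "'a \<Rightarrow> real"
  assumes "prob_space M"
    and "open I" and "is_interval I" and "I \<subseteq> {0..}"
    and "\<beta> \<in> {-1, 1}" and "\<kappa> > -1" and "\<mu> > -1"
    and "N \<ge> n" and "\<xi> \<in> {0..1}" and "t0 \<in> I" and "T > 0" and "t0 + \<beta> * T \<in> I"
    and "noise_C1 M w" and "noise_C2 M w I n" and "noise_C3 M w I n"
    and "jacobi_noise_error M w n N \<mu> \<kappa> \<xi> \<beta> T t0 X"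
  shows "AE x in M. X x = 0"
proof -
  obtain p q U where pq: "degree p < n" "degree q < n" and U: "U \<in> borel_measurable M"
      "integrable M (\<lambda>x. (U x)\<^sup>2)" and w: "\<And>\<tau>. \<tau> \<in> I \<Longrightarrow> AE x in M. w \<tau> x = poly p \<tau> + poly q \<tau> * U x"
    using noise_C3_decomposition[OF assms(1,13,15,4)] by blast
  define r where "r = [:t0, \<beta> * T:]"
  have dec: "AE x in M. w (t0 + \<beta> * T * t) x = poly (p \<circ>\<^sub>p r) t + poly (q \<circ>\<^sub>p r) t * U x"
    if "t \<in> {0..1}" for t
    using w[OF is_interval_affine_mem[OF assms(3,10,12) that]] by (simp add: r_def poly_pcompose mult.commute)
  have deg: "degree (p \<circ>\<^sub>p r) < n" "degree (q \<circ>\<^sub>p r) < n"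
    using pq degree_pcompose_linear_le unfolding r_def by (metis le_less_trans)+
  have cont: "continuous_on {0<..<1} (\<lambda>t. jacobi_kernel n N \<mu> \<kappa> \<xi> \<beta> T t * poly s t)" for s
    by (intro continuous_on_mult continuous_on_jacobi_kernel continuous_on_poly continuous_intros)
  show ?thesis
    by (rule ms_integral_01_AE_eq_0[OF assms(1) U dec cont cont
        jacobi_kernel_poly_integral_tendsto_0[OF assms(6,7) deg(1)]
        jacobi_kernel_poly_integral_tendsto_0[OF assms(6,7) deg(2)]
        assms(16)[unfolded jacobi_noise_error_def]])
qed

end
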